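(* Let $\Omega$ be the closed unit ball in $\mathbb{R}^3$ and let $\boldsymbol{\eta}$ be a smooth divergence-free vector field on $\Omega$ with $\nabla\times\nabla\times\boldsymbol{\eta}=0$. Then: (i) the poloidal and toroidal scalars $P_{\boldsymbol{\eta}},T_{\boldsymbol{\eta}}$ of $\boldsymbol{\eta}$ can be chosen to be harmonic functions on $\Omega$; (ii) with this choice, the poloidal part of $\boldsymbol{\eta}$ is a gradient of a harmonic function, namely $$\nabla\times\nabla\times(\mathbf{r}P_{\boldsymbol{\eta}})=\nabla\big[\partial_r(rP_{\boldsymbol{\eta}})\big],$$ where $\partial_r(rP_{\boldsymbol{\eta}})$ is harmonic on $\Omega$.
   Context: Use spherical coordinates $(r,\lambda,\theta)$ on $\Omega$, and write $\mathbf{r}=r\hat{\mathbf{r}}$ for the position vector. Every smooth divergence-free vector field $\mathbf{w}$ on $\Omega$ admits a poloidal–toroidal decomposition $$\mathbf{w}=\nabla\times\nabla\times(\mathbf{r}P_{\mathbf{w}})+\nabla\times(\mathbf{r}T_{\mathbf{w}}),$$ with smooth scalar functions $P_{\mathbf{w}}$ (the poloidal scalar) and $T_{\mathbf{w}}$ (the toroidal scalar). These scalars are unique up to the addition of arbitrary functions of $r$ alone. *)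

theory Defs
  imports "HOL-Analysis.Analysis"
begin

text \<open>Points of R^3 are elements of real^3, the position vector at x is x itself.
  Omega is the closed unit ball cball 0 1.\<close>

definition partial :: "3 \<Rightarrow> (real^3 \<Rightarrow> 'b::real_normed_vector) \<Rightarrow> real^3 \<Rightarrow> 'b" where
  "partial i f x = frechet_derivative f (at x) (axis i 1)"

fun iter_partial :: "3 list \<Rightarrow> (real^3 \<Rightarrow> 'b::real_normed_vector) \<Rightarrow> real^3 \<Rightarrow> 'b" where
  "iter_partial [] f = f"
| "iter_partial (i # is) f = partial i (iter_partial is f)"

definition smooth_on :: "(real^3) set \<Rightarrow> (real^3 \<Rightarrow> 'b::real_normed_vector) \<Rightarrow> bool" where
  "smooth_on U f \<longleftrightarrow> (\<forall>is. iter_partial is f differentiable_on U)"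

definition smooth_on_Omega :: "(real^3 \<Rightarrow> 'b::real_normed_vector) \<Rightarrow> bool" where
  "smooth_on_Omega f \<longleftrightarrow> (\<exists>U. open U \<and> cball 0 1 \<subseteq> U \<and> smooth_on U f)"

definition grad :: "(real^3 \<Rightarrow> real) \<Rightarrow> real^3 \<Rightarrow> real^3" where
  "grad f x = (\<chi> i. partial i f x)"

definition div3 :: "(real^3 \<Rightarrow> real^3) \<Rightarrow> real^3 \<Rightarrow> real" where
  "div3 F x = (\<Sum>i\<in>UNIV. partial i (\<lambda>y. F y $ i) x)"

definition curl :: "(real^3 \<Rightarrow> real^3) \<Rightarrow> real^3 \<Rightarrow> real^3" where
  "curl F x = vector
     [partial 2 (\<lambda>y. F y $ 3) x - partial 3 (\<lambda>y. F y $ 2) x,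
      partial 3 (\<lambda>y. F y $ 1) x - partial 1 (\<lambda>y. F y $ 3) x,
      partial 1 (\<lambda>y. F y $ 2) x - partial 2 (\<lambda>y. F y $ 1) x]"

definition laplacian :: "(real^3 \<Rightarrow> real) \<Rightarrow> real^3 \<Rightarrow> real" where
  "laplacian f x = (\<Sum>i\<in>UNIV. partial i (partial i f) x)"

definition harmonic_on_Omega :: "(real^3 \<Rightarrow> real) \<Rightarrow> bool" where
  "harmonic_on_Omega f \<longleftrightarrow> (\<forall>x\<in>cball 0 1. laplacian f x = 0)"

definition pol_tor_rep :: "(real^3 \<Rightarrow> real^3) \<Rightarrow> (real^3 \<Rightarrow> real) \<Rightarrow> (real^3 \<Rightarrow> real) \<Rightarrow> bool" where
  "pol_tor_rep w P T \<longleftrightarrow>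
     (\<forall>x\<in>cball 0 1. w x = curl (curl (\<lambda>y. P y *\<^sub>R y)) x + curl (\<lambda>y. T y *\<^sub>R y) x)"

text \<open>The radial derivative d/dr (r P) = P + r dP/dr, where r d/dr is the Euler
  operator x . grad (this is also its continuous extension to the origin).\<close>
definition dr_rP :: "(real^3 \<Rightarrow> real) \<Rightarrow> real^3 \<Rightarrow> real" where
  "dr_rP P x = P x + x \<bullet> grad P x"

end

theory Submission
  imports Defs
begin

text \<open>
  Write R_k h x (radial_integral k h x) for the integral of t^k h(t x) over [0,1]. Then
  d_i (R_k h) = R_(k+1) (d_i h), so R_0 is a right inverse of the radial operator
  h \<mapsto> d_r(r h) = h + x . grad h, and it turns the Laplacian into R_2 of the Laplacian;
  moreover a curl-free field Z on a ball is the gradient of its Poincare potential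
  sum_j x_j R_0 Z_j, which is harmonic when div Z = 0.

  For any smooth P, curl curl (P x) = grad d_r(r P) - (Lap P) x. If P is harmonic this is a
  gradient, and d_r(r P) is harmonic because Lap d_r(r P) = 3 Lap P + x . grad Lap P.
  Conversely, a curl-free, divergence-free field Z is the poloidal field of the harmonic scalar
  P = R_0 phi, phi its Poincare potential. Apply this first to curl eta, which is curl-free and
  divergence-free, to obtain T with curl curl (T x) = curl eta; then eta - curl (T x) is curl-free
  and divergence-free and yields P. Identities on the open ball extend to Omega by continuity.
\<close>

section \<open>Partial derivatives\<close>

lemma partial_has_derivative:
  "(f has_derivative D) (at x) \<Longrightarrow> partial i f x = D (axis i 1)"
  unfolding partial_def using frechet_derivative_at by metis

lemma has_derivative_partials:
  fixes f :: "real^3 \<Rightarrow> real"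
  assumes "f differentiable (at x)"
  shows "(f has_derivative (\<lambda>v. \<Sum>i\<in>UNIV. v$i * partial i f x)) (at x)"
proof -
  have D: "(f has_derivative frechet_derivative f (at x)) (at x)"
    using assms frechet_derivative_works by blast
  have "frechet_derivative f (at x) = (\<lambda>v. \<Sum>i\<in>UNIV. v$i * partial i f x)"
  proof
    fix v :: "real^3"
    have "frechet_derivative f (at x) v = frechet_derivative f (at x) (\<Sum>i\<in>UNIV. v$i *\<^sub>R axis i 1)"
      using basis_expansion[of v] by (simp add: scalar_mult_eq_scaleR)
    also have "\<dots> = (\<Sum>i\<in>UNIV. v$i * frechet_derivative f (at x) (axis i 1))"
      using has_derivative_linear[OF D] by (simp add: linear_sum linear_scale)
    finally show "frechet_derivative f (at x) v = (\<Sum>i\<in>UNIV. v$i * partial i f x)"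
      by (simp add: partial_def)
  qed
  with D show ?thesis by simp
qed

lemma partial_cong:
  assumes "open S" "x \<in> S" "\<And>y. y \<in> S \<Longrightarrow> f y = g y"
  shows "partial i f x = partial i g x"
proof -
  have "\<And>D. (f has_derivative D) (at x) \<longleftrightarrow> (g has_derivative D) (at x)"
    using has_derivative_transform_within_open[OF _ assms(1,2)] assms(3) by metis
  then show ?thesis unfolding partial_def frechet_derivative_def by simp
qed

lemma partial_const [simp]: "partial i (\<lambda>y. c) = (\<lambda>x. 0)"
  by (rule ext, rule partial_has_derivative[where D="\<lambda>v. 0", simplified]) (rule has_derivative_const)

lemma partial_component: "partial i (\<lambda>y::real^3. y$j) = (\<lambda>x. if i = j then 1 else 0)"
proof (rule ext)
  fix x :: "real^3"
  have "((\<lambda>y::real^3. y$j) has_derivative (\<lambda>v. v$j)) (at x)"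
    by (rule bounded_linear_imp_has_derivative) (rule bounded_linear_vec_nth)
  then show "partial i (\<lambda>y::real^3. y$j) x = (if i = j then 1 else 0)"
    by (simp add: partial_has_derivative axis_def)
qed

lemma differentiable_component: "(\<lambda>y::real^3. y$j) differentiable (at x)"
  by (rule bounded_linear_imp_differentiable[OF bounded_linear_vec_nth])

lemma partial_add:
  fixes f g :: "real^3 \<Rightarrow> real"
  assumes "f differentiable (at x)" "g differentiable (at x)"
  shows "partial i (\<lambda>y. f y + g y) x = partial i f x + partial i g x"
proof -
  have "((\<lambda>y. f y + g y) has_derivative (\<lambda>v. frechet_derivative f (at x) v + frechet_derivative g (at x) v)) (at x)"
    using assms by (intro has_derivative_add) (auto simp: frechet_derivative_works[symmetric])
  from partial_has_derivative[OF this] show ?thesis by (simp add: partial_def)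
qed

lemma partial_diff:
  fixes f g :: "real^3 \<Rightarrow> real"
  assumes "f differentiable (at x)" "g differentiable (at x)"
  shows "partial i (\<lambda>y. f y - g y) x = partial i f x - partial i g x"
proof -
  have "((\<lambda>y. f y - g y) has_derivative (\<lambda>v. frechet_derivative f (at x) v - frechet_derivative g (at x) v)) (at x)"
    using assms by (intro has_derivative_diff) (auto simp: frechet_derivative_works[symmetric])
  from partial_has_derivative[OF this] show ?thesis by (simp add: partial_def)
qed

lemma partial_mult:
  fixes f g :: "real^3 \<Rightarrow> real"
  assumes "f differentiable (at x)" "g differentiable (at x)"
  shows "partial i (\<lambda>y. f y * g y) x = partial i f x * g x + f x * partial i g x"
proof -
  have "((\<lambda>y. f y * g y) has_derivative (\<lambda>v. f x * frechet_derivative g (at x) v + frechet_derivative f (at x) v * g x)) (at x)"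
    using assms by (intro has_derivative_mult) (auto simp: frechet_derivative_works[symmetric])
  from partial_has_derivative[OF this] show ?thesis by (simp add: partial_def)
qed

lemma partial_cmult:
  fixes f :: "real^3 \<Rightarrow> real"
  assumes "f differentiable (at x)"
  shows "partial i (\<lambda>y. c * f y) x = c * partial i f x"
  using partial_mult[OF _ assms, of "\<lambda>y. c"] by simp

lemma partial_component_mult:
  fixes f :: "real^3 \<Rightarrow> real"
  assumes "f differentiable (at x)"
  shows "partial i (\<lambda>y. y$j * f y) x = (if i = j then f x else 0) + x$j * partial i f x"
  by (simp add: partial_mult[OF differentiable_component assms] partial_component)

lemma partial_sum:
  fixes f :: "'i \<Rightarrow> real^3 \<Rightarrow> real"
  assumes "finite I" "\<And>k. k \<in> I \<Longrightarrow> f k differentiable (at x)"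
  shows "partial i (\<lambda>y. \<Sum>k\<in>I. f k y) x = (\<Sum>k\<in>I. partial i (f k) x)"
proof -
  have "((\<lambda>y. \<Sum>k\<in>I. f k y) has_derivative (\<lambda>v. \<Sum>k\<in>I. frechet_derivative (f k) (at x) v)) (at x)"
    using assms by (intro has_derivative_sum) (auto simp: frechet_derivative_works[symmetric])
  from partial_has_derivative[OF this] show ?thesis by (simp add: partial_def)
qed

lemma partial_vec_nth:
  fixes F :: "real^3 \<Rightarrow> real^3"
  assumes "F differentiable (at x)"
  shows "partial i (\<lambda>y. F y $ m) x = partial i F x $ m"
proof -
  have "((\<lambda>y. F y $ m) has_derivative (\<lambda>v. frechet_derivative F (at x) v $ m)) (at x)"
    using assms
    by (intro bounded_linear.has_derivative[OF bounded_linear_vec_nth])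
       (auto simp: frechet_derivative_works[symmetric])
  from partial_has_derivative[OF this] show ?thesis by (simp add: partial_def)
qed

lemma has_real_derivative_along_line:
  fixes f :: "real^3 \<Rightarrow> real"
  assumes "f differentiable (at (p + s *\<^sub>R v))"
  shows "((\<lambda>s. f (p + s *\<^sub>R v)) has_real_derivative
           (\<Sum>j\<in>UNIV. v$j * partial j f (p + s *\<^sub>R v))) (at s)"
proof -
  have "((\<lambda>s. p + s *\<^sub>R v) has_derivative (\<lambda>h. h *\<^sub>R v)) (at s)"
    by (auto intro!: derivative_eq_intros)
  from diff_chain_at[OF this has_derivative_partials[OF assms]]
  have "((\<lambda>s. f (p + s *\<^sub>R v)) has_derivative
          (\<lambda>h. \<Sum>j\<in>UNIV. (h *\<^sub>R v)$j * partial j f (p + s *\<^sub>R v))) (at s)"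
    by (simp add: o_def)
  moreover have "(\<lambda>h. \<Sum>j\<in>UNIV. (h *\<^sub>R v)$j * partial j f (p + s *\<^sub>R v))
      = (\<lambda>h. (\<Sum>j\<in>UNIV. v$j * partial j f (p + s *\<^sub>R v)) * h)"
    by (rule ext) (simp add: sum_distrib_left sum_distrib_right mult_ac)
  ultimately show ?thesis by (simp add: has_field_derivative_def)
qed

lemma has_real_derivative_along_axis:
  fixes f :: "real^3 \<Rightarrow> real"
  assumes "f differentiable (at (p + s *\<^sub>R axis i 1))"
  shows "((\<lambda>s. f (p + s *\<^sub>R axis i 1)) has_real_derivative partial i f (p + s *\<^sub>R axis i 1)) (at s)"
  using has_real_derivative_along_line[OF assms]
  unfolding axis_def by (simp add: if_distrib[where f="\<lambda>c. c * _"] cong: if_cong)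

section \<open>Smooth functions\<close>

text \<open>Finite-order approximation of smooth_on, for induction on the order. Note that
  Ck_on k asks the partials of order k to be differentiable as well.\<close>

definition Ck_on :: "nat \<Rightarrow> (real^3) set \<Rightarrow> (real^3 \<Rightarrow> 'b::real_normed_vector) \<Rightarrow> bool" where
  "Ck_on k S f \<longleftrightarrow> (\<forall>is. length is \<le> k \<longrightarrow> iter_partial is f differentiable_on S)"

lemma iter_partial_append: "iter_partial is (partial i f) = iter_partial (is @ [i]) f"
  by (induction "is") auto

lemma iter_partial_cong:
  assumes "open S" "\<And>y. y \<in> S \<Longrightarrow> f y = g y" "y \<in> S"
  shows "iter_partial is f y = iter_partial is g y"
  using assms(3) by (induction "is" arbitrary: y) (auto intro!: partial_cong[OF assms(1)] assms(2))

lemma smooth_on_iff_Ck_on: "smooth_on S f \<longleftrightarrow> (\<forall>k. Ck_on k S f)"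
  unfolding smooth_on_def Ck_on_def by auto

lemma Ck_on_Suc: "Ck_on (Suc k) S f \<longleftrightarrow> f differentiable_on S \<and> (\<forall>i. Ck_on k S (partial i f))"
proof
  assume H: "Ck_on (Suc k) S f"
  have "f differentiable_on S"
    using H[unfolded Ck_on_def, rule_format, of "[]"] by simp
  moreover have "Ck_on k S (partial i f)" for i
    using H unfolding Ck_on_def iter_partial_append by auto
  ultimately show "f differentiable_on S \<and> (\<forall>i. Ck_on k S (partial i f))" by blast
next
  assume H: "f differentiable_on S \<and> (\<forall>i. Ck_on k S (partial i f))"
  show "Ck_on (Suc k) S f" unfolding Ck_on_def
  proof (intro allI impI)
    fix "is" :: "3 list" assume L: "length is \<le> Suc k"
    show "iter_partial is f differentiable_on S"
    proof (cases "is" rule: rev_cases)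
      case Nil then show ?thesis using H by simp
    next
      case (snoc js i)
      then show ?thesis
        using H L unfolding Ck_on_def by (simp add: iter_partial_append[symmetric])
    qed
  qed
qed

lemma Ck_on_Suc_imp: "Ck_on (Suc k) S f \<Longrightarrow> Ck_on k S f"
  unfolding Ck_on_def by simp

lemma differentiable_on_cong_open:
  assumes "open S" "\<And>y. y \<in> S \<Longrightarrow> f y = g y" "f differentiable_on S"
  shows "g differentiable_on S"
  using assms unfolding differentiable_on_def differentiable_def
  by (metis has_derivative_transform_within_open)

lemma differentiable_on_vec_nth:
  fixes F :: "real^3 \<Rightarrow> real^3"
  assumes "F differentiable_on S"
  shows "(\<lambda>y. F y $ m) differentiable_on S"
  using assms unfolding differentiable_on_def differentiable_def
  by (metis bounded_linear.has_derivative[OF bounded_linear_vec_nth])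

lemma Ck_on_cong:
  assumes "open S" "\<And>y. y \<in> S \<Longrightarrow> f y = g y" "Ck_on k S f"
  shows "Ck_on k S g"
  unfolding Ck_on_def
proof (intro allI impI)
  fix "is" :: "3 list" assume "length is \<le> k"
  then have "iter_partial is f differentiable_on S" using assms(3) unfolding Ck_on_def by blast
  then show "iter_partial is g differentiable_on S"
    by (rule differentiable_on_cong_open[OF assms(1), rotated]) (rule iter_partial_cong[OF assms(1,2)])
qed

lemma differentiable_on_open_imp_at:
  "f differentiable_on S \<Longrightarrow> open S \<Longrightarrow> y \<in> S \<Longrightarrow> f differentiable (at y)"
  using differentiable_on_def at_within_open by metis

lemma Ck_on_add:
  fixes f g :: "real^3 \<Rightarrow> real"
  assumes "open S" shows "Ck_on k S f \<Longrightarrow> Ck_on k S g \<Longrightarrow> Ck_on k S (\<lambda>y. f y + g y)"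
proof (induction k arbitrary: f g)
  case 0 then show ?case unfolding Ck_on_def by (auto intro: differentiable_on_add)
next
  case (Suc k)
  have df: "f differentiable_on S" "g differentiable_on S" using Suc.prems by (auto simp: Ck_on_Suc)
  have "Ck_on k S (partial i (\<lambda>y. f y + g y))" for i
  proof (rule Ck_on_cong[OF assms])
    show "Ck_on k S (\<lambda>y. partial i f y + partial i g y)"
      using Suc by (auto simp: Ck_on_Suc)
    show "partial i f y + partial i g y = partial i (\<lambda>y. f y + g y) y" if "y \<in> S" for y
      using df that assms by (simp add: partial_add differentiable_on_open_imp_at)
  qed
  with df show ?case unfolding Ck_on_Suc by (auto intro: differentiable_on_add)
qed

lemma Ck_on_mult:
  fixes f g :: "real^3 \<Rightarrow> real"
  assumes "open S" shows "Ck_on k S f \<Longrightarrow> Ck_on k S g \<Longrightarrow> Ck_on k S (\<lambda>y. f y * g y)"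
proof (induction k arbitrary: f g)
  case 0 then show ?case unfolding Ck_on_def by (auto intro: differentiable_on_mult)
next
  case (Suc k)
  have df: "f differentiable_on S" "g differentiable_on S" using Suc.prems by (auto simp: Ck_on_Suc)
  have "Ck_on k S (partial i (\<lambda>y. f y * g y))" for i
  proof (rule Ck_on_cong[OF assms])
    have "Ck_on k S f" "Ck_on k S g" "Ck_on k S (partial i f)" "Ck_on k S (partial i g)"
      using Suc.prems by (auto simp: Ck_on_Suc intro: Ck_on_Suc_imp)
    then show "Ck_on k S (\<lambda>y. partial i f y * g y + f y * partial i g y)"
      by (intro Ck_on_add[OF assms] Suc.IH)
    show "partial i f y * g y + f y * partial i g y = partial i (\<lambda>y. f y * g y) y" if "y \<in> S" for y
      using df that assms by (simp add: partial_mult differentiable_on_open_imp_at)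
  qed
  with df show ?case unfolding Ck_on_Suc by (auto intro: differentiable_on_mult)
qed

lemma Ck_on_const: "Ck_on k S (\<lambda>y. c)"
proof (induction k arbitrary: c)
  case 0 then show ?case by (simp add: Ck_on_def)
next
  case (Suc k) then show ?case by (simp add: Ck_on_Suc)
qed

lemma Ck_on_component: "Ck_on k S (\<lambda>y::real^3. y$j)"
proof (cases k)
  case 0 then show ?thesis
    by (auto simp: Ck_on_def differentiable_at_imp_differentiable_on differentiable_component)
next
  case (Suc m) then show ?thesis
    by (auto simp: Ck_on_Suc partial_component Ck_on_const
        differentiable_at_imp_differentiable_on differentiable_component)
qed

lemma Ck_on_vec_nth:
  fixes F :: "real^3 \<Rightarrow> real^3"
  assumes "open S" shows "Ck_on k S F \<Longrightarrow> Ck_on k S (\<lambda>y. F y $ m)"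
proof (induction k arbitrary: F)
  case 0 then show ?case
    unfolding Ck_on_def by (auto intro: differentiable_on_vec_nth)
next
  case (Suc k)
  have df: "F differentiable_on S" using Suc.prems by (auto simp: Ck_on_Suc)
  have "Ck_on k S (partial i (\<lambda>y. F y $ m))" for i
  proof (rule Ck_on_cong[OF assms])
    show "Ck_on k S (\<lambda>y. partial i F y $ m)" using Suc by (auto simp: Ck_on_Suc)
    show "partial i F y $ m = partial i (\<lambda>y. F y $ m) y" if "y \<in> S" for y
      using df that assms by (simp add: partial_vec_nth differentiable_on_open_imp_at)
  qed
  with df show ?case unfolding Ck_on_Suc by (auto intro: differentiable_on_vec_nth)
qed

lemma smooth_on_subset: "smooth_on S f \<Longrightarrow> T \<subseteq> S \<Longrightarrow> smooth_on T f"
  unfolding smooth_on_def using differentiable_on_subset by blast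

lemma smooth_on_partial: "smooth_on S f \<Longrightarrow> smooth_on S (partial i f)"
  unfolding smooth_on_def by (simp add: iter_partial_append)

lemma smooth_on_imp_differentiable_on: "smooth_on S f \<Longrightarrow> f differentiable_on S"
  unfolding smooth_on_def by (metis iter_partial.simps(1))

lemma smooth_on_imp_differentiable_at:
  "smooth_on S f \<Longrightarrow> open S \<Longrightarrow> x \<in> S \<Longrightarrow> f differentiable (at x)"
  using smooth_on_imp_differentiable_on differentiable_on_open_imp_at by blast

lemma smooth_on_imp_continuous_on: "smooth_on S f \<Longrightarrow> continuous_on S f"
  using smooth_on_imp_differentiable_on differentiable_imp_continuous_on by blast

lemma smooth_on_add:
  "open S \<Longrightarrow> smooth_on S f \<Longrightarrow> smooth_on S g \<Longrightarrow> smooth_on S (\<lambda>y. f y + g y :: real)"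
  by (simp add: smooth_on_iff_Ck_on Ck_on_add)

lemma smooth_on_mult:
  "open S \<Longrightarrow> smooth_on S f \<Longrightarrow> smooth_on S g \<Longrightarrow> smooth_on S (\<lambda>y. f y * g y :: real)"
  by (simp add: smooth_on_iff_Ck_on Ck_on_mult)

lemma smooth_on_const: "smooth_on S (\<lambda>y. c)"
  by (simp add: smooth_on_iff_Ck_on Ck_on_const)

lemma smooth_on_diff:
  assumes "open S" "smooth_on S f" "smooth_on S g"
  shows "smooth_on S (\<lambda>y. f y - g y :: real)"
proof -
  have "smooth_on S (\<lambda>y. f y + (- 1) * g y)"
    using assms by (intro smooth_on_add smooth_on_mult smooth_on_const)
  then show ?thesis by simp
qed

lemma smooth_on_component: "smooth_on S (\<lambda>y::real^3. y$j)"
  by (simp add: smooth_on_iff_Ck_on Ck_on_component)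

lemma smooth_on_vec_nth:
  "open S \<Longrightarrow> smooth_on S (F :: real^3 \<Rightarrow> real^3) \<Longrightarrow> smooth_on S (\<lambda>y. F y $ m)"
  by (simp add: smooth_on_iff_Ck_on Ck_on_vec_nth)

lemma smooth_on_sum:
  fixes f :: "'i \<Rightarrow> real^3 \<Rightarrow> real"
  assumes "open S" "finite I" "\<And>k. k \<in> I \<Longrightarrow> smooth_on S (f k)"
  shows "smooth_on S (\<lambda>y. \<Sum>k\<in>I. f k y)"
  using assms(2,3)
  by (induction I rule: finite_induct) (auto simp: smooth_on_const smooth_on_add[OF assms(1)])

lemma continuous_on_vector_field:
  fixes F :: "real^3 \<Rightarrow> real^3"
  assumes "\<And>m. smooth_on S (\<lambda>y. F y $ m)"
  shows "continuous_on S F"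
proof -
  have "continuous_on S (\<lambda>y. \<chi> m. F y $ m)"
    by (intro continuous_on_vec_lambda smooth_on_imp_continuous_on assms)
  then show ?thesis by (simp add: vec_lambda_eta)
qed

section \<open>Symmetry of second partial derivatives\<close>

lemma second_difference_mean_value:
  fixes f :: "real^3 \<Rightarrow> real"
  assumes S: "open S" "smooth_on S f" and h: "h > 0"
    and square: "\<And>s t. s \<in> {0..h} \<Longrightarrow> t \<in> {0..h} \<Longrightarrow> x + s *\<^sub>R axis i 1 + t *\<^sub>R axis j 1 \<in> S"
  obtains \<xi> \<eta> where "\<xi> \<in> {0<..<h}" "\<eta> \<in> {0<..<h}"
    "f (x + h *\<^sub>R axis i 1 + h *\<^sub>R axis j 1) - f (x + h *\<^sub>R axis i 1) - f (x + h *\<^sub>R axis j 1) + f x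
       = h\<^sup>2 * partial j (partial i f) (x + \<xi> *\<^sub>R axis i 1 + \<eta> *\<^sub>R axis j 1)"
proof -
  let ?a = "axis i (1::real)" and ?b = "axis j (1::real)"
  have dif: "g differentiable (at (x + s *\<^sub>R ?a + t *\<^sub>R ?b))"
    if "s \<in> {0..h}" "t \<in> {0..h}" "smooth_on S g" for s t g
    using smooth_on_imp_differentiable_at[OF that(3) S(1) square[OF that(1,2)]] .
  have swap: "x + s *\<^sub>R ?a + h *\<^sub>R ?b = (x + h *\<^sub>R ?b) + s *\<^sub>R ?a" for s
    by (simp add: algebra_simps)
  define \<phi> where "\<phi> s = f ((x + h *\<^sub>R ?b) + s *\<^sub>R ?a) - f (x + s *\<^sub>R ?a)" for s
  have "\<exists>\<xi>. 0 < \<xi> \<and> \<xi> < h \<and> \<phi> h - \<phi> 0 = (h - 0) *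
      (partial i f ((x + h *\<^sub>R ?b) + \<xi> *\<^sub>R ?a) - partial i f (x + \<xi> *\<^sub>R ?a))"
  proof (rule MVT2[OF h])
    fix s assume s: "0 \<le> s" "s \<le> h"
    have "f differentiable at ((x + h *\<^sub>R ?b) + s *\<^sub>R ?a)"
      using dif[of s h f] s h S(2) by (simp add: swap)
    then have "((\<lambda>s. f ((x + h *\<^sub>R ?b) + s *\<^sub>R ?a)) has_real_derivative
        partial i f ((x + h *\<^sub>R ?b) + s *\<^sub>R ?a)) (at s)"
      by (rule has_real_derivative_along_axis)
    moreover have "f differentiable at (x + s *\<^sub>R ?a)"
      using dif[of s 0 f] s h S(2) by simp
    then have "((\<lambda>s. f (x + s *\<^sub>R ?a)) has_real_derivative partial i f (x + s *\<^sub>R ?a)) (at s)"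
      by (rule has_real_derivative_along_axis)
    ultimately show "(\<phi> has_real_derivative
        partial i f ((x + h *\<^sub>R ?b) + s *\<^sub>R ?a) - partial i f (x + s *\<^sub>R ?a)) (at s)"
      unfolding \<phi>_def by (rule DERIV_diff)
  qed
  then obtain \<xi> where \<xi>: "0 < \<xi>" "\<xi> < h" and first:
    "\<phi> h - \<phi> 0 = h * (partial i f (x + \<xi> *\<^sub>R ?a + h *\<^sub>R ?b) - partial i f (x + \<xi> *\<^sub>R ?a))"
    by (auto simp: swap)
  have "\<exists>\<eta>. 0 < \<eta> \<and> \<eta> < h \<and> partial i f ((x + \<xi> *\<^sub>R ?a) + h *\<^sub>R ?b) - partial i f ((x + \<xi> *\<^sub>R ?a) + 0 *\<^sub>R ?b)
      = (h - 0) * partial j (partial i f) ((x + \<xi> *\<^sub>R ?a) + \<eta> *\<^sub>R ?b)"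
  proof (rule MVT2[OF h])
    fix t assume "0 \<le> t" "t \<le> h"
    then have "partial i f differentiable at ((x + \<xi> *\<^sub>R ?a) + t *\<^sub>R ?b)"
      using dif[of \<xi> t "partial i f"] \<xi> smooth_on_partial[OF S(2)] by simp
    then show "((\<lambda>t. partial i f ((x + \<xi> *\<^sub>R ?a) + t *\<^sub>R ?b)) has_real_derivative
        partial j (partial i f) ((x + \<xi> *\<^sub>R ?a) + t *\<^sub>R ?b)) (at t)"
      by (rule has_real_derivative_along_axis)
  qed
  then obtain \<eta> where \<eta>: "0 < \<eta>" "\<eta> < h" and second:
    "partial i f (x + \<xi> *\<^sub>R ?a + h *\<^sub>R ?b) - partial i f (x + \<xi> *\<^sub>R ?a)
       = h * partial j (partial i f) (x + \<xi> *\<^sub>R ?a + \<eta> *\<^sub>R ?b)"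
    by auto
  have "f (x + h *\<^sub>R ?a + h *\<^sub>R ?b) - f (x + h *\<^sub>R ?a) - f (x + h *\<^sub>R ?b) + f x = \<phi> h - \<phi> 0"
    by (simp add: \<phi>_def swap)
  also have "\<dots> = h\<^sup>2 * partial j (partial i f) (x + \<xi> *\<^sub>R ?a + \<eta> *\<^sub>R ?b)"
    unfolding first second by (simp add: power2_eq_square)
  finally show ?thesis using \<xi> \<eta> that by simp
qed

lemma mixed_partials_meet_near:
  fixes f :: "real^3 \<Rightarrow> real"
  assumes S: "open S" "smooth_on S f" and \<delta>: "\<delta> > 0" "ball x \<delta> \<subseteq> S"
  obtains p q where "dist p x < \<delta>" "dist q x < \<delta>"
    "partial j (partial i f) p = partial i (partial j f) q"
proof -
  let ?a = "axis i (1::real)" and ?b = "axis j (1::real)"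
  define h where "h = \<delta> / 3"
  have h: "h > 0" using \<delta> by (simp add: h_def)
  have near: "dist (x + s *\<^sub>R u + t *\<^sub>R v) x < \<delta>"
    if "s \<in> {0..h}" "t \<in> {0..h}" "norm u = 1" "norm v = 1" for s t and u v :: "real^3"
  proof -
    have "dist (x + s *\<^sub>R u + t *\<^sub>R v) x = norm (s *\<^sub>R u + t *\<^sub>R v)"
      by (simp add: dist_norm add.assoc)
    also have "\<dots> \<le> \<bar>s\<bar> * norm u + \<bar>t\<bar> * norm v"
      using norm_triangle_ineq[of "s *\<^sub>R u" "t *\<^sub>R v"] by simp
    also have "\<dots> \<le> 2 * h" using that by simp
    finally show ?thesis using h unfolding h_def by linarith
  qed
  have in_S: "x + s *\<^sub>R u + t *\<^sub>R v \<in> S"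
    if "s \<in> {0..h}" "t \<in> {0..h}" "norm u = 1" "norm v = 1" for s t and u v :: "real^3"
    using near[OF that] \<delta>(2) by (auto simp: dist_commute)
  have unit: "norm ?a = 1" "norm ?b = 1" by simp_all
  obtain \<xi> \<eta> where \<xi>\<eta>: "\<xi> \<in> {0<..<h}" "\<eta> \<in> {0<..<h}" and ij:
    "f (x + h *\<^sub>R ?a + h *\<^sub>R ?b) - f (x + h *\<^sub>R ?a) - f (x + h *\<^sub>R ?b) + f x
       = h\<^sup>2 * partial j (partial i f) (x + \<xi> *\<^sub>R ?a + \<eta> *\<^sub>R ?b)"
    by (rule second_difference_mean_value[OF S h in_S[OF _ _ unit]])
  obtain \<xi>' \<eta>' where \<xi>\<eta>': "\<xi>' \<in> {0<..<h}" "\<eta>' \<in> {0<..<h}" and ji: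
    "f (x + h *\<^sub>R ?b + h *\<^sub>R ?a) - f (x + h *\<^sub>R ?b) - f (x + h *\<^sub>R ?a) + f x
       = h\<^sup>2 * partial i (partial j f) (x + \<xi>' *\<^sub>R ?b + \<eta>' *\<^sub>R ?a)"
    by (rule second_difference_mean_value[OF S h in_S[OF _ _ unit(2,1)]])
  have "x + h *\<^sub>R ?b + h *\<^sub>R ?a = x + h *\<^sub>R ?a + h *\<^sub>R ?b"
    by (simp add: algebra_simps)
  from ij ji[unfolded this] have "h\<^sup>2 * partial j (partial i f) (x + \<xi> *\<^sub>R ?a + \<eta> *\<^sub>R ?b)
      = h\<^sup>2 * partial i (partial j f) (x + \<xi>' *\<^sub>R ?b + \<eta>' *\<^sub>R ?a)"
    by linarith
  then have "partial j (partial i f) (x + \<xi> *\<^sub>R ?a + \<eta> *\<^sub>R ?b)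
      = partial i (partial j f) (x + \<xi>' *\<^sub>R ?b + \<eta>' *\<^sub>R ?a)"
    using h by simp
  moreover have "dist (x + \<xi> *\<^sub>R ?a + \<eta> *\<^sub>R ?b) x < \<delta>" "dist (x + \<xi>' *\<^sub>R ?b + \<eta>' *\<^sub>R ?a) x < \<delta>"
    using near[OF _ _ unit] near[OF _ _ unit(2,1)] \<xi>\<eta> \<xi>\<eta>' by auto
  ultimately show ?thesis using that by blast
qed

lemma partial_commute:
  fixes f :: "real^3 \<Rightarrow> real"
  assumes S: "open S" "smooth_on S f" "x \<in> S"
  shows "partial j (partial i f) x = partial i (partial j f) x"
proof -
  let ?A = "partial j (partial i f) x" and ?B = "partial i (partial j f) x"
  have cont: "isCont (partial l (partial k f)) x" for k l
  proof -
    have "continuous_on S (partial l (partial k f))"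
      by (intro smooth_on_imp_continuous_on smooth_on_partial S(2))
    then show ?thesis using continuous_on_eq_continuous_at[OF S(1)] S(3) by blast
  qed
  have "\<bar>?A - ?B\<bar> < 2 * e" if "e > 0" for e
  proof -
    have "\<exists>d>0. \<forall>y. dist y x < d \<longrightarrow> dist (partial l (partial k f) y) (partial l (partial k f) x) < e"
      for k l
      using cont[where k=k and l=l] \<open>e > 0\<close> by (simp add: continuous_at_eps_delta)
    then obtain d1 d2 where
      d1: "d1 > 0" "\<And>y. dist y x < d1 \<Longrightarrow> \<bar>partial j (partial i f) y - ?A\<bar> < e" and
      d2: "d2 > 0" "\<And>y. dist y x < d2 \<Longrightarrow> \<bar>partial i (partial j f) y - ?B\<bar> < e"
      unfolding dist_real_def by meson
    obtain r where r: "r > 0" "ball x r \<subseteq> S" using S open_contains_ball by blast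
    have "min r (min d1 d2) > 0" "ball x (min r (min d1 d2)) \<subseteq> S"
      using r d1(1) d2(1) by auto
    then obtain p q where "dist p x < min r (min d1 d2)" "dist q x < min r (min d1 d2)"
      and "partial j (partial i f) p = partial i (partial j f) q"
      by (rule mixed_partials_meet_near[OF S(1,2)])
    with d1(2)[of p] d2(2)[of q] show ?thesis by auto
  qed
  show ?thesis
  proof (rule ccontr)
    assume "?A \<noteq> ?B"
    then have "\<bar>?A - ?B\<bar> / 2 > 0" by simp
    from \<open>\<And>e. e > 0 \<Longrightarrow> \<bar>?A - ?B\<bar> < 2 * e\<close>[OF this] show False by simp
  qed
qed

section \<open>The radial integral operator\<close>

definition radial_integral :: "nat \<Rightarrow> (real^3 \<Rightarrow> real) \<Rightarrow> real^3 \<Rightarrow> real" where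
  "radial_integral k f x = integral {0..1} (\<lambda>t. t^k * f (t *\<^sub>R x))"

lemma scaleR_mem_ball_0:
  fixes x :: "'a::real_normed_vector"
  assumes "x \<in> ball 0 r" "t \<in> {0..1}"
  shows "t *\<^sub>R x \<in> ball 0 r"
proof -
  have "norm (t *\<^sub>R x) \<le> norm x" using assms(2) by (simp add: mult_left_le_one_le)
  then show ?thesis using assms(1) by simp
qed

lemma radial_integrand_integrable:
  assumes "continuous_on (ball 0 r) g" "x \<in> ball (0::real^3) r"
  shows "(\<lambda>t. t^k * g (t *\<^sub>R x)) integrable_on {0..1}"
proof (rule integrable_continuous_interval)
  have "continuous_on {0..1} (\<lambda>t. g (t *\<^sub>R x))"
    by (rule continuous_on_compose2[OF assms(1)])
       (auto intro!: continuous_intros scaleR_mem_ball_0[OF assms(2)])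
  then show "continuous_on {0..1} (\<lambda>t. t^k * g (t *\<^sub>R x))" by (intro continuous_intros)
qed

lemma radial_integral_cong:
  "(\<And>t. t \<in> {0..1} \<Longrightarrow> f (t *\<^sub>R x) = g (t *\<^sub>R x)) \<Longrightarrow> radial_integral k f x = radial_integral k g x"
  unfolding radial_integral_def by (intro integral_cong) auto

lemma radial_integral_vanish:
  assumes "x \<in> ball (0::real^3) r" "\<And>y. y \<in> ball 0 r \<Longrightarrow> g y = 0"
  shows "radial_integral k g x = 0"
proof -
  have "radial_integral k g x = radial_integral k (\<lambda>y. 0) x"
    by (rule radial_integral_cong) (metis assms(2) scaleR_mem_ball_0[OF assms(1)])
  then show ?thesis by (simp add: radial_integral_def)
qed

lemma inner_grad: "v \<bullet> grad f y = (\<Sum>i\<in>UNIV. v$i * partial i f y)"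
  by (simp add: inner_vec_def grad_def)

lemma continuous_on_grad: "smooth_on S f \<Longrightarrow> continuous_on S (grad f)"
  unfolding grad_def
  by (intro continuous_on_vec_lambda smooth_on_imp_continuous_on smooth_on_partial)

lemma has_derivative_radial_integrand:
  fixes f :: "real^3 \<Rightarrow> real"
  assumes "f differentiable (at (t *\<^sub>R y))"
  shows "((\<lambda>y. t^k * f (t *\<^sub>R y)) has_derivative
           (\<lambda>v. t^(Suc k) * (v \<bullet> grad f (t *\<^sub>R y)))) (at y)"
proof -
  have "((\<lambda>y. t *\<^sub>R y) has_derivative (\<lambda>v. t *\<^sub>R v)) (at y)"
    by (auto intro!: derivative_eq_intros)
  from diff_chain_at[OF this has_derivative_partials[OF assms]]
  have "((\<lambda>y. f (t *\<^sub>R y)) has_derivative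
          (\<lambda>v. \<Sum>i\<in>UNIV. (t *\<^sub>R v)$i * partial i f (t *\<^sub>R y))) (at y)"
    by (simp add: o_def)
  then have "((\<lambda>y. t^k * f (t *\<^sub>R y)) has_derivative
      (\<lambda>v. t^k * (\<Sum>i\<in>UNIV. (t *\<^sub>R v)$i * partial i f (t *\<^sub>R y)))) (at y)"
    by (rule has_derivative_mult_right)
  moreover have "(\<lambda>v. t^k * (\<Sum>i\<in>UNIV. (t *\<^sub>R v)$i * partial i f (t *\<^sub>R y)))
      = (\<lambda>v. t^(Suc k) * (v \<bullet> grad f (t *\<^sub>R y)))"
    by (rule ext) (simp add: inner_grad sum_distrib_left mult_ac)
  ultimately show ?thesis by simp
qed

lemma radial_integral_sum:
  assumes "finite I" "\<And>i. i \<in> I \<Longrightarrow> continuous_on (ball 0 r) (g i)" "x \<in> ball (0::real^3) r"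
  shows "radial_integral k (\<lambda>y. \<Sum>i\<in>I. g i y) x = (\<Sum>i\<in>I. radial_integral k (g i) x)"
  unfolding radial_integral_def sum_distrib_left
  using assms by (intro integral_sum radial_integrand_integrable) auto

lemma radial_integral_cmult: "radial_integral k (\<lambda>y. c * g y) x = c * radial_integral k g x"
  by (simp add: radial_integral_def mult.left_commute)

lemma has_derivative_radial_integral_grad:
  assumes f: "smooth_on (ball 0 r) f" and x: "x \<in> ball (0::real^3) r"
  shows "(radial_integral k f has_derivative
           (\<lambda>v. radial_integral (Suc k) (\<lambda>y. v \<bullet> grad f y) x)) (at x)"
proof -
  let ?U = "ball (0::real^3) r"
  \<comment> \<open>leibniz_rule wants the derivative of the integrand as a bounded linear function
    depending continuously on (y, t)\<close>
  define D where "D y t = (t^(Suc k)) *\<^sub>R blinfun_inner_left (grad f (t *\<^sub>R y))"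
    for y :: "real^3" and t :: real
  have D_apply: "blinfun_apply (D y t) v = t^(Suc k) * (v \<bullet> grad f (t *\<^sub>R y))" for y t v
    by (simp add: D_def scaleR_blinfun.rep_eq inner_commute)
  have der: "((\<lambda>y. t^k * f (t *\<^sub>R y)) has_derivative blinfun_apply (D y t)) (at y within ?U)"
    if "y \<in> ?U" "t \<in> cbox 0 1" for y t
  proof -
    have "t *\<^sub>R y \<in> ?U" using scaleR_mem_ball_0[OF that(1)] that(2) by simp
    then have "f differentiable (at (t *\<^sub>R y))"
      by (rule smooth_on_imp_differentiable_at[OF f open_ball])
    from has_derivative_radial_integrand[OF this, of k]
    show ?thesis unfolding D_apply by (simp add: has_derivative_at_withinI)
  qed
  have int: "(\<lambda>t. t^k * f (t *\<^sub>R y)) integrable_on cbox 0 1" if "y \<in> ?U" for y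
    using radial_integrand_integrable[OF smooth_on_imp_continuous_on[OF f] that] by simp
  have cont: "continuous_on (?U \<times> cbox 0 1) (\<lambda>(y, t). D y t)"
  proof -
    have "continuous_on (?U \<times> cbox 0 1) (\<lambda>p. grad f (snd p *\<^sub>R fst p))"
      by (rule continuous_on_compose2[OF continuous_on_grad[OF f]])
         (auto intro!: continuous_intros scaleR_mem_ball_0)
    then show ?thesis unfolding D_def case_prod_beta
      by (intro continuous_intros continuous_on_compose2[OF
          bounded_linear.continuous_on[OF bounded_linear_blinfun_inner_left]]) auto
  qed
  have "D x integrable_on cbox 0 1"
  proof (rule integrable_continuous)
    show "continuous_on (cbox 0 1) (D x)"
      by (rule continuous_on_compose2[OF cont, where f="\<lambda>t. (x, t)", simplified])
         (auto intro!: continuous_intros x)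
  qed
  then have "blinfun_apply (integral (cbox 0 1) (D x)) v
      = radial_integral (Suc k) (\<lambda>y. v \<bullet> grad f y) x" for v
    using blinfun_apply_integral[of "D x" "cbox 0 1"] by (simp add: radial_integral_def D_apply)
  moreover have "(radial_integral k f has_derivative blinfun_apply (integral (cbox 0 1) (D x))) (at x)"
    using leibniz_rule[OF der int cont x convex_ball] at_within_open[OF x open_ball]
    unfolding radial_integral_def by simp
  ultimately show ?thesis by (metis (no_types, lifting) ext)
qed

lemma has_derivative_radial_integral:
  assumes f: "smooth_on (ball 0 r) f" and x: "x \<in> ball (0::real^3) r"
  shows "(radial_integral k f has_derivative
           (\<lambda>v. \<Sum>i\<in>UNIV. v$i * radial_integral (Suc k) (partial i f) x)) (at x)"
proof -
  have "radial_integral (Suc k) (\<lambda>y. v \<bullet> grad f y) x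
      = (\<Sum>i\<in>UNIV. v$i * radial_integral (Suc k) (partial i f) x)" for v
    unfolding inner_grad
    by (simp add: radial_integral_sum[OF _ _ x] radial_integral_cmult continuous_on_mult_left
        smooth_on_imp_continuous_on smooth_on_partial f)
  with has_derivative_radial_integral_grad[OF assms, of k] show ?thesis by simp
qed

lemma radial_integral_differentiable:
  "smooth_on (ball 0 r) f \<Longrightarrow> x \<in> ball 0 r \<Longrightarrow> radial_integral k f differentiable (at x)"
  using has_derivative_radial_integral differentiable_def by blast

lemma partial_radial_integral:
  assumes "smooth_on (ball 0 r) f" "x \<in> ball 0 r"
  shows "partial i (radial_integral k f) x = radial_integral (Suc k) (partial i f) x"
  using partial_has_derivative[OF has_derivative_radial_integral[OF assms]]
  unfolding axis_def by (simp add: if_distrib[where f="\<lambda>c. c * _"] cong: if_cong)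

lemma smooth_on_radial_integral:
  assumes "smooth_on (ball 0 r) f"
  shows "smooth_on (ball 0 r) (radial_integral k f)"
proof -
  have "Ck_on n (ball 0 r) (radial_integral k f)" if "smooth_on (ball 0 r) f" for n k f
    using that
  proof (induction n arbitrary: k f)
    case 0 then show ?case
      by (simp add: Ck_on_def differentiable_on_eq_differentiable_at radial_integral_differentiable)
  next
    case (Suc n)
    have "Ck_on n (ball 0 r) (partial i (radial_integral k f))" for i
    proof (rule Ck_on_cong[OF open_ball])
      show "Ck_on n (ball 0 r) (radial_integral (Suc k) (partial i f))"
        by (rule Suc.IH[OF smooth_on_partial[OF Suc.prems]])
      show "radial_integral (Suc k) (partial i f) y = partial i (radial_integral k f) y"
        if "y \<in> ball 0 r" for y
        using partial_radial_integral[OF Suc.prems that] by simp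
    qed
    moreover have "radial_integral k f differentiable_on ball 0 r"
      using Suc.prems
      by (simp add: differentiable_on_eq_differentiable_at radial_integral_differentiable)
    ultimately show ?case unfolding Ck_on_Suc by blast
  qed
  with assms show ?thesis unfolding smooth_on_iff_Ck_on by blast
qed

lemma radial_integral_fundamental:
  assumes h: "smooth_on (ball 0 r) h" and x: "x \<in> ball (0::real^3) r"
  shows "radial_integral 0 h x + (\<Sum>j\<in>UNIV. x$j * radial_integral 1 (partial j h) x) = h x"
proof -
  \<comment> \<open>integrate the derivative of t \<mapsto> t h(t x) over [0,1]\<close>
  define g' where "g' t = h (t *\<^sub>R x) + (\<Sum>j\<in>UNIV. x$j * (t * partial j h (t *\<^sub>R x)))" for t
  have "(g' has_integral (1 * h (1 *\<^sub>R x) - 0 * h (0 *\<^sub>R x))) {0..1}"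
  proof (rule fundamental_theorem_of_calculus)
    fix t :: real assume t: "t \<in> {0..1}"
    have "h differentiable (at (0 + t *\<^sub>R x))"
      using smooth_on_imp_differentiable_at[OF h open_ball scaleR_mem_ball_0[OF x t]] by simp
    from DERIV_mult[OF DERIV_ident has_real_derivative_along_line[OF this]]
    have "((\<lambda>t. t * h (t *\<^sub>R x)) has_real_derivative g' t) (at t)"
      by (simp add: g'_def sum_distrib_left mult_ac)
    then show "((\<lambda>t. t * h (t *\<^sub>R x)) has_vector_derivative g' t) (at t within {0..1})"
      by (simp add: has_real_derivative_iff_has_vector_derivative has_vector_derivative_at_within)
  qed simp
  then have "h x = integral {0..1} g'" by (simp add: integral_unique)
  also have "\<dots> = integral {0..1} (\<lambda>t. h (t *\<^sub>R x))
      + (\<Sum>j\<in>UNIV. x$j * integral {0..1} (\<lambda>t. t * partial j h (t *\<^sub>R x)))"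
  proof -
    have "(\<lambda>t. t^0 * h (t *\<^sub>R x)) integrable_on {0..1}"
      "(\<lambda>t. t^1 * partial j h (t *\<^sub>R x)) integrable_on {0..1}" for j
      by (intro radial_integrand_integrable[OF _ x] smooth_on_imp_continuous_on smooth_on_partial h)+
    then show ?thesis
      unfolding g'_def by (simp add: integral_add integral_sum integrable_sum integrable_on_mult_right)
  qed
  also have "\<dots> = radial_integral 0 h x + (\<Sum>j\<in>UNIV. x$j * radial_integral 1 (partial j h) x)"
    by (simp add: radial_integral_def)
  finally show ?thesis ..
qed

lemma dr_rP_eq: "dr_rP P x = P x + (\<Sum>i\<in>UNIV. x$i * partial i P x)"
  by (simp add: dr_rP_def inner_grad)

lemma dr_rP_radial_integral:
  assumes "smooth_on (ball 0 r) h" "x \<in> ball (0::real^3) r"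
  shows "dr_rP (radial_integral 0 h) x = h x"
  using radial_integral_fundamental[OF assms] partial_radial_integral[OF assms]
  by (simp add: dr_rP_eq)

lemma laplacian_radial_integral:
  assumes f: "smooth_on (ball 0 r) f" and x: "x \<in> ball (0::real^3) r"
  shows "laplacian (radial_integral 0 f) x = radial_integral 2 (laplacian f) x"
proof -
  have "partial i (partial i (radial_integral 0 f)) x = radial_integral 2 (partial i (partial i f)) x" for i
  proof -
    have "partial i (partial i (radial_integral 0 f)) x = partial i (radial_integral 1 (partial i f)) x"
      by (rule partial_cong[OF open_ball x]) (simp add: partial_radial_integral[OF f])
    also have "\<dots> = radial_integral 2 (partial i (partial i f)) x"
      using partial_radial_integral[OF smooth_on_partial[OF f] x] by (simp add: numeral_2_eq_2)
    finally show ?thesis .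
  qed
  then have "laplacian (radial_integral 0 f) x = (\<Sum>i\<in>UNIV. radial_integral 2 (partial i (partial i f)) x)"
    by (simp add: laplacian_def)
  also have "\<dots> = radial_integral 2 (laplacian f) x"
    unfolding laplacian_def
    by (rule radial_integral_sum[OF _ _ x, symmetric])
       (auto intro: smooth_on_imp_continuous_on smooth_on_partial f)
  finally show ?thesis .
qed

definition poincare_potential :: "(real^3 \<Rightarrow> real^3) \<Rightarrow> real^3 \<Rightarrow> real" where
  "poincare_potential Z y = (\<Sum>j\<in>UNIV. y$j * radial_integral 0 (\<lambda>y. Z y $ j) y)"

lemma smooth_on_poincare_potential:
  assumes "\<And>j. smooth_on (ball 0 r) (\<lambda>y. Z y $ j)"
  shows "smooth_on (ball 0 r) (poincare_potential Z)"
  unfolding poincare_potential_def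
  by (intro smooth_on_sum smooth_on_mult smooth_on_component smooth_on_radial_integral assms) auto

lemma partial_poincare_potential:
  fixes Z :: "real^3 \<Rightarrow> real^3"
  assumes Z: "\<And>j. smooth_on (ball 0 r) (\<lambda>y. Z y $ j)" and x: "x \<in> ball (0::real^3) r"
    and sym: "\<And>j t. t \<in> {0..1} \<Longrightarrow> partial i (\<lambda>y. Z y $ j) (t *\<^sub>R x) = partial j (\<lambda>y. Z y $ i) (t *\<^sub>R x)"
  shows "partial i (poincare_potential Z) x = Z x $ i"
proof -
  let ?Z = "\<lambda>j y. Z y $ j"
  have dR: "radial_integral 0 (?Z j) differentiable (at x)" for j
    by (rule radial_integral_differentiable[OF Z x])
  have "partial i (poincare_potential Z) x = (\<Sum>j\<in>UNIV. partial i (\<lambda>y. y$j * radial_integral 0 (?Z j) y) x)"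
    unfolding poincare_potential_def
    by (rule partial_sum) (auto intro!: differentiable_mult dR differentiable_component)
  also have "\<dots> = (\<Sum>j\<in>UNIV. (if i = j then radial_integral 0 (?Z j) x else 0)
                      + x$j * radial_integral 1 (partial i (?Z j)) x)"
    by (simp add: partial_component_mult[OF dR] partial_radial_integral[OF Z x])
  also have "\<dots> = radial_integral 0 (?Z i) x + (\<Sum>j\<in>UNIV. x$j * radial_integral 1 (partial j (?Z i)) x)"
  proof -
    have "radial_integral 1 (partial i (?Z j)) x = radial_integral 1 (partial j (?Z i)) x" for j
      by (rule radial_integral_cong) (rule sym)
    then show ?thesis by (simp add: sum.distrib)
  qed
  also have "\<dots> = Z x $ i" by (rule radial_integral_fundamental[OF Z x])
  finally show ?thesis .
qed

section \<open>Vector calculus identities\<close>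

definition cyclic :: "3 \<Rightarrow> 3 \<Rightarrow> 3 \<Rightarrow> bool" where
  "cyclic a b c \<longleftrightarrow> (a = 1 \<and> b = 2 \<and> c = 3) \<or> (a = 2 \<and> b = 3 \<and> c = 1) \<or> (a = 3 \<and> b = 1 \<and> c = 2)"

lemma cyclic_exists: "\<exists>b c. cyclic a b c"
  using exhaust_3[of a] unfolding cyclic_def by blast

lemma cyclic_rotate: "cyclic a b c \<Longrightarrow> cyclic b c a"
  unfolding cyclic_def by auto

lemma cyclic_distinct: "cyclic a b c \<Longrightarrow> a \<noteq> b \<and> b \<noteq> c \<and> a \<noteq> c"
  unfolding cyclic_def by auto

lemma sum_UNIV_cyclic: "cyclic a b c \<Longrightarrow> sum g (UNIV::3 set) = g a + g b + g c"
  unfolding cyclic_def sum_3 by (auto simp: ac_simps)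

lemma curl_component:
  "cyclic a b c \<Longrightarrow> curl F x $ a = partial b (\<lambda>y. F y $ c) x - partial c (\<lambda>y. F y $ b) x"
  unfolding cyclic_def curl_def by auto

lemma curl_component_fun:
  "cyclic a b c \<Longrightarrow> (\<lambda>y. curl F y $ a) = (\<lambda>y. partial b (\<lambda>y. F y $ c) y - partial c (\<lambda>y. F y $ b) y)"
  using curl_component by blast

lemma curl_eq_0_imp_partial_symmetric:
  assumes "curl G x = 0"
  shows "partial i (\<lambda>y. G y $ j) x = partial j (\<lambda>y. G y $ i) x"
proof -
  have "curl G x $ 1 = 0" "curl G x $ 2 = 0" "curl G x $ 3 = 0" using assms by auto
  then have "partial 2 (\<lambda>y. G y $ 3) x = partial 3 (\<lambda>y. G y $ 2) x"
       "partial 3 (\<lambda>y. G y $ 1) x = partial 1 (\<lambda>y. G y $ 3) x"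
       "partial 1 (\<lambda>y. G y $ 2) x = partial 2 (\<lambda>y. G y $ 1) x"
    by (simp_all add: curl_def)
  then show ?thesis using exhaust_3[of i] exhaust_3[of j] by auto
qed

lemma smooth_on_curl:
  assumes "open S" "\<And>m. smooth_on S (\<lambda>y. F y $ m)"
  shows "smooth_on S (\<lambda>y. curl F y $ a)"
proof -
  obtain b c where c: "cyclic a b c" using cyclic_exists by blast
  show ?thesis unfolding curl_component_fun[OF c]
    by (intro smooth_on_diff smooth_on_partial assms)
qed

lemma smooth_on_scaled_position:
  "open S \<Longrightarrow> smooth_on S f \<Longrightarrow> smooth_on S (\<lambda>y. (f y *\<^sub>R y) $ m)"
  by (simp, intro smooth_on_mult smooth_on_component)

lemma smooth_on_laplacian: "open S \<Longrightarrow> smooth_on S f \<Longrightarrow> smooth_on S (laplacian f)"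
  unfolding laplacian_def[abs_def] by (intro smooth_on_sum smooth_on_partial) auto

lemma smooth_on_dr_rP: "open S \<Longrightarrow> smooth_on S P \<Longrightarrow> smooth_on S (dr_rP P)"
  unfolding dr_rP_eq[abs_def]
  by (intro smooth_on_add smooth_on_sum smooth_on_mult smooth_on_component smooth_on_partial) auto

lemma curl_diff:
  fixes F G :: "real^3 \<Rightarrow> real^3"
  assumes "\<And>m. (\<lambda>y. F y $ m) differentiable (at x)" "\<And>m. (\<lambda>y. G y $ m) differentiable (at x)"
  shows "curl (\<lambda>y. F y - G y) x = curl F x - curl G x"
  using assms by (simp add: vec_eq_iff forall_3 curl_def partial_diff)

lemma div3_diff:
  fixes F G :: "real^3 \<Rightarrow> real^3"
  assumes "\<And>m. (\<lambda>y. F y $ m) differentiable (at x)" "\<And>m. (\<lambda>y. G y $ m) differentiable (at x)"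
  shows "div3 (\<lambda>y. F y - G y) x = div3 F x - div3 G x"
  using assms by (simp add: div3_def partial_diff sum_subtractf)

lemma div3_curl:
  assumes S: "open S" "\<And>m. smooth_on S (\<lambda>y. F y $ m)" "x \<in> S"
  shows "div3 (curl F) x = 0"
proof -
  let ?F = "\<lambda>m y. F y $ m"
  have c: "cyclic 1 2 3" "cyclic 2 3 1" "cyclic 3 1 2" by (auto simp: cyclic_def)
  have d: "partial i (?F m) differentiable (at x)" for i m
    by (rule smooth_on_imp_differentiable_at[OF smooth_on_partial[OF S(2)] S(1,3)])
  have "div3 (curl F) x = partial 1 (\<lambda>y. partial 2 (?F 3) y - partial 3 (?F 2) y) x
     + partial 2 (\<lambda>y. partial 3 (?F 1) y - partial 1 (?F 3) y) x
     + partial 3 (\<lambda>y. partial 1 (?F 2) y - partial 2 (?F 1) y) x"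
    unfolding div3_def sum_3 curl_component_fun[OF c(1)] curl_component_fun[OF c(2)]
      curl_component_fun[OF c(3)] ..
  also have "\<dots> = 0"
    using partial_commute[OF S(1,2,3), of _ _ 1] partial_commute[OF S(1,2,3), of _ _ 2]
      partial_commute[OF S(1,2,3), of _ _ 3]
    by (simp add: partial_diff d)
  finally show ?thesis .
qed

lemma curl_curl_component:
  assumes S: "open S" "\<And>m. smooth_on S (\<lambda>y. F y $ m)" "x \<in> S" and c: "cyclic a b c"
  shows "curl (curl F) x $ a =
    partial b (partial a (\<lambda>y. F y $ b)) x - partial b (partial b (\<lambda>y. F y $ a)) x
    - partial c (partial c (\<lambda>y. F y $ a)) x + partial c (partial a (\<lambda>y. F y $ c)) x"
proof -
  have d: "partial i (\<lambda>y. F y $ m) differentiable (at x)" for i m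
    by (rule smooth_on_imp_differentiable_at[OF smooth_on_partial[OF S(2)] S(1,3)])
  have "curl (curl F) x $ a = partial b (\<lambda>y. curl F y $ c) x - partial c (\<lambda>y. curl F y $ b) x"
    by (rule curl_component[OF c])
  also have "(\<lambda>y. curl F y $ c) = (\<lambda>y. partial a (\<lambda>y. F y $ b) y - partial b (\<lambda>y. F y $ a) y)"
    by (rule curl_component_fun[OF cyclic_rotate[OF cyclic_rotate[OF c]]])
  also have "(\<lambda>y. curl F y $ b) = (\<lambda>y. partial c (\<lambda>y. F y $ a) y - partial a (\<lambda>y. F y $ c) y)"
    by (rule curl_component_fun[OF cyclic_rotate[OF c]])
  finally show ?thesis by (simp add: partial_diff d)
qed

lemma partial_dr_rP:
  assumes S: "open S" "smooth_on S P" "y \<in> S"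
  shows "partial i (dr_rP P) y = 2 * partial i P y + (\<Sum>j\<in>UNIV. y$j * partial i (partial j P) y)"
proof -
  have dP: "partial j P differentiable (at y)" for j
    by (rule smooth_on_imp_differentiable_at[OF smooth_on_partial[OF S(2)] S(1,3)])
  have dm: "(\<lambda>y. y$j * partial j P y) differentiable (at y)" for j
    by (intro differentiable_mult dP differentiable_component)
  have "partial i (dr_rP P) y = partial i (\<lambda>x. P x + (\<Sum>j\<in>UNIV. x$j * partial j P x)) y"
    by (simp add: dr_rP_eq[abs_def])
  also have "\<dots> = partial i P y + (\<Sum>j\<in>UNIV. partial i (\<lambda>x. x$j * partial j P x) y)"
    using smooth_on_imp_differentiable_at[OF S(2,1,3)] dm
    by (simp add: partial_add partial_sum differentiable_sum)
  also have "\<dots> = 2 * partial i P y + (\<Sum>j\<in>UNIV. y$j * partial i (partial j P) y)"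
    by (simp add: partial_component_mult[OF dP] sum.distrib)
  finally show ?thesis .
qed

lemma curl_curl_scaled_position:
  assumes S: "open S" "smooth_on S P" "x \<in> S"
  shows "curl (curl (\<lambda>y. P y *\<^sub>R y)) x = grad (dr_rP P) x - laplacian P x *\<^sub>R x"
proof (subst vec_eq_iff, intro allI)
  fix a :: 3
  obtain b c where c: "cyclic a b c" using cyclic_exists by blast
  have d: "a \<noteq> b" "b \<noteq> c" "a \<noteq> c" using cyclic_distinct[OF c] by auto
  have comp: "(\<lambda>y. (P y *\<^sub>R y) $ m) = (\<lambda>y. y$m * P y)" for m by (simp add: mult.commute)
  have sm: "smooth_on S (\<lambda>y. (P y *\<^sub>R y) $ m)" for m
    by (rule smooth_on_scaled_position[OF S(1,2)])
  have dP: "partial i P differentiable (at y)" if "y \<in> S" for i y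
    by (rule smooth_on_imp_differentiable_at[OF smooth_on_partial[OF S(2)] S(1) that])
  have pp: "partial k (partial i (\<lambda>y. y$j * P y)) x
      = (if k = j then partial i P x else 0) + x$j * partial k (partial i P) x" if "i \<noteq> j" for i j k
  proof -
    have "partial k (partial i (\<lambda>y. y$j * P y)) x = partial k (\<lambda>y. y$j * partial i P y) x"
      using that smooth_on_imp_differentiable_at[OF S(2,1)]
      by (intro partial_cong[OF S(1,3)]) (simp add: partial_component_mult)
    then show ?thesis by (simp add: partial_component_mult[OF dP[OF S(3)]])
  qed
  have "curl (curl (\<lambda>y. P y *\<^sub>R y)) x $ a =
      (partial a P x + x$b * partial b (partial a P) x) - x$a * partial b (partial b P) x
      - x$a * partial c (partial c P) x + (partial a P x + x$c * partial c (partial a P) x)"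
    unfolding curl_curl_component[OF S(1) sm S(3) c] comp
    using pp[of a b b] pp[of b a b] pp[of c a c] pp[of a c c] d
    by (simp add: eq_commute[of c a] eq_commute[of b a] eq_commute[of c b])
  moreover have "grad (dr_rP P) x $ a
      = 2 * partial a P x + x$a * partial a (partial a P) x + x$b * partial a (partial b P) x
        + x$c * partial a (partial c P) x"
    by (simp add: grad_def partial_dr_rP[OF S] sum_UNIV_cyclic[OF c] add.assoc)
  moreover have "partial b (partial a P) x = partial a (partial b P) x"
    "partial c (partial a P) x = partial a (partial c P) x"
    by (rule partial_commute[OF S])+
  ultimately show "curl (curl (\<lambda>y. P y *\<^sub>R y)) x $ a = (grad (dr_rP P) x - laplacian P x *\<^sub>R x) $ a"
    by (simp add: laplacian_def sum_UNIV_cyclic[OF c] algebra_simps)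
qed

lemma laplacian_dr_rP:
  assumes S: "open S" "smooth_on S P" "x \<in> S"
  shows "laplacian (dr_rP P) x = 3 * laplacian P x + x \<bullet> grad (laplacian P) x"
proof -
  have d: "partial i (partial j P) differentiable (at y)" if "y \<in> S" for i j y
    by (rule smooth_on_imp_differentiable_at[OF smooth_on_partial[OF smooth_on_partial[OF S(2)]] S(1) that])
  have second: "partial i (partial i (dr_rP P)) x
      = 3 * partial i (partial i P) x + (\<Sum>j\<in>UNIV. x$j * partial i (partial i (partial j P)) x)" for i
  proof -
    have dm: "(\<lambda>y. y$j * partial i (partial j P) y) differentiable (at x)" for j
      by (intro differentiable_mult d S(3) differentiable_component)
    have "partial i (partial i (dr_rP P)) x
        = partial i (\<lambda>y. 2 * partial i P y + (\<Sum>j\<in>UNIV. y$j * partial i (partial j P) y)) x"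
      by (rule partial_cong[OF S(1,3)]) (rule partial_dr_rP[OF S(1,2)])
    also have "\<dots> = 2 * partial i (partial i P) x + (\<Sum>j\<in>UNIV. partial i (\<lambda>y. y$j * partial i (partial j P) y) x)"
      using smooth_on_imp_differentiable_at[OF smooth_on_partial[OF S(2)] S(1,3)] dm
      by (simp add: partial_add partial_cmult partial_sum differentiable_sum differentiable_mult)
    also have "\<dots> = 3 * partial i (partial i P) x + (\<Sum>j\<in>UNIV. x$j * partial i (partial i (partial j P)) x)"
      by (simp add: partial_component_mult[OF d[OF S(3)]] sum.distrib)
    finally show ?thesis .
  qed
  have third: "(\<Sum>i\<in>UNIV. partial i (partial i (partial j P)) x) = partial j (laplacian P) x" for j
  proof -
    have "partial i (partial i (partial j P)) x = partial j (partial i (partial i P)) x" for i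
    proof -
      have "partial i (partial i (partial j P)) x = partial i (partial j (partial i P)) x"
        by (rule partial_cong[OF S(1,3)]) (rule partial_commute[OF S(1,2)])
      also have "\<dots> = partial j (partial i (partial i P)) x"
        by (rule partial_commute[OF S(1) smooth_on_partial[OF S(2)] S(3)])
      finally show ?thesis .
    qed
    then show ?thesis
      unfolding laplacian_def[abs_def] using d[OF S(3)] by (simp add: partial_sum)
  qed
  have "laplacian (dr_rP P) x = (\<Sum>i\<in>UNIV. 3 * partial i (partial i P) x)
      + (\<Sum>i\<in>UNIV. \<Sum>j\<in>UNIV. x$j * partial i (partial i (partial j P)) x)"
    by (simp add: laplacian_def second sum.distrib)
  also have "(\<Sum>i\<in>UNIV. \<Sum>j\<in>UNIV. x$j * partial i (partial i (partial j P)) x)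
      = (\<Sum>j\<in>UNIV. x$j * (\<Sum>i\<in>UNIV. partial i (partial i (partial j P)) x))"
    by (subst sum.swap) (simp add: sum_distrib_left)
  finally show ?thesis by (simp add: third inner_grad laplacian_def sum_distrib_left)
qed

lemma partial_poincare_potential_curl_free:
  fixes Z :: "real^3 \<Rightarrow> real^3"
  assumes Z: "\<And>j. smooth_on (ball 0 r) (\<lambda>y. Z y $ j)"
    and curl: "\<And>y. y \<in> ball 0 \<rho> \<Longrightarrow> curl Z y = 0" and x: "x \<in> ball 0 \<rho>" and "\<rho> \<le> r"
  shows "partial i (poincare_potential Z) x = Z x $ i"
proof (rule partial_poincare_potential[OF Z])
  show "x \<in> ball 0 r" using x \<open>\<rho> \<le> r\<close> by auto
  show "partial i (\<lambda>y. Z y $ j) (t *\<^sub>R x) = partial j (\<lambda>y. Z y $ i) (t *\<^sub>R x)"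
    if "t \<in> {0..1}" for j t
    by (rule curl_eq_0_imp_partial_symmetric[OF curl[OF scaleR_mem_ball_0[OF x that]]])
qed

lemma laplacian_poincare_potential_curl_free:
  fixes Z :: "real^3 \<Rightarrow> real^3"
  assumes Z: "\<And>j. smooth_on (ball 0 r) (\<lambda>y. Z y $ j)"
    and curl: "\<And>y. y \<in> ball 0 \<rho> \<Longrightarrow> curl Z y = 0" and x: "x \<in> ball 0 \<rho>" and "\<rho> \<le> r"
  shows "laplacian (poincare_potential Z) x = div3 Z x"
  unfolding laplacian_def div3_def
  using partial_poincare_potential_curl_free[OF Z curl _ \<open>\<rho> \<le> r\<close>]
  by (intro sum.cong refl partial_cong[OF open_ball x]) auto

section \<open>Harmonic poloidal and toroidal scalars\<close>

lemma ball_between_cball_open: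
  assumes "open U" "cball (0::real^3) 1 \<subseteq> U"
  obtains r where "r > 1" "ball 0 r \<subseteq> U"
proof -
  obtain e where e: "e > 0" "(\<Union>x\<in>cball (0::real^3) 1. ball x e) \<subseteq> U"
    using compact_subset_open_imp_ball_epsilon_subset[OF compact_cball assms] by blast
  have "ball 0 (1 + e) \<subseteq> U"
  proof
    fix y :: "real^3" assume "y \<in> ball 0 (1 + e)"
    then have n: "norm y < 1 + e" by simp
    define x where "x = y /\<^sub>R (1 + e)"
    have "norm x = norm y / (1 + e)" using e by (simp add: x_def divide_inverse_commute)
    also have "\<dots> < 1" using n e by simp
    finally have x_cball: "x \<in> cball 0 1" by simp
    have "1 - 1 / (1 + e) = e / (1 + e)" using e by (simp add: field_simps)
    moreover have "y - x = (1 - 1 / (1 + e)) *\<^sub>R y"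
      by (simp add: x_def scaleR_diff_left inverse_eq_divide)
    ultimately have "norm (y - x) = e / (1 + e) * norm y" using e by simp
    then have "dist x y = e / (1 + e) * norm y" by (simp add: dist_norm norm_minus_commute)
    also have "\<dots> < e / (1 + e) * (1 + e)" using e n by (intro mult_strict_left_mono) auto
    also have "\<dots> = e" using e by simp
    finally have "y \<in> ball x e" by simp
    then show "y \<in> U" using e(2) x_cball by blast
  qed
  then show ?thesis using that[of "1 + e"] e by simp
qed

lemma eq_on_cball_by_continuity:
  fixes F G :: "real^3 \<Rightarrow> 'b::real_normed_vector"
  assumes "continuous_on (cball 0 1) F" "continuous_on (cball 0 1) G"
    and "\<And>x. x \<in> ball 0 1 \<Longrightarrow> F x = G x" and "x \<in> cball 0 1"
  shows "F x = G x"
proof -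
  have "F x - G x = 0"
    using continuous_constant_on_closure[of "ball 0 1" "\<lambda>x. F x - G x" 0 x] assms
    by (simp add: continuous_on_diff)
  then show ?thesis by simp
qed

lemma harmonic_on_Omega_if_harmonic_on_ball:
  assumes U: "open U" "cball 0 1 \<subseteq> U" "smooth_on U f"
    and harm: "\<And>x. x \<in> ball 0 1 \<Longrightarrow> laplacian f x = 0"
  shows "harmonic_on_Omega f"
  unfolding harmonic_on_Omega_def
proof
  fix x :: "real^3" assume x: "x \<in> cball 0 1"
  have "continuous_on (cball 0 1) (laplacian f)"
    using smooth_on_imp_continuous_on[OF smooth_on_laplacian[OF U(1,3)]] U(2)
    by (rule continuous_on_subset)
  then show "laplacian f x = 0"
    using eq_on_cball_by_continuity[of "laplacian f" "\<lambda>x. 0"] harm x by auto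
qed

lemma exists_harmonic_poloidal_scalar:
  fixes Z :: "real^3 \<Rightarrow> real^3"
  assumes r: "r > 1" and Z: "\<And>j. smooth_on (ball 0 r) (\<lambda>y. Z y $ j)"
    and curl: "\<And>x. x \<in> ball 0 1 \<Longrightarrow> curl Z x = 0"
    and div: "\<And>x. x \<in> ball 0 1 \<Longrightarrow> div3 Z x = 0"
  obtains P where "smooth_on (ball 0 r) P" "\<And>x. x \<in> ball 0 1 \<Longrightarrow> laplacian P x = 0"
    "\<And>x. x \<in> ball 0 1 \<Longrightarrow> curl (curl (\<lambda>y. P y *\<^sub>R y)) x = Z x"
proof -
  let ?B = "ball (0::real^3) 1" and ?V = "ball (0::real^3) r"
  have BV: "?B \<subseteq> ?V" using r by auto
  define \<phi> where "\<phi> = poincare_potential Z"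
  have sm\<phi>: "smooth_on ?V \<phi>" unfolding \<phi>_def by (rule smooth_on_poincare_potential[OF Z])
  have grad\<phi>: "partial i \<phi> x = Z x $ i" if "x \<in> ?B" for i x
    unfolding \<phi>_def using r by (intro partial_poincare_potential_curl_free[OF Z curl that]) auto
  have lap\<phi>: "laplacian \<phi> x = 0" if "x \<in> ?B" for x
    unfolding \<phi>_def using laplacian_poincare_potential_curl_free[OF Z curl that] r div[OF that]
    by simp
  define P where "P = radial_integral 0 \<phi>"
  have smP: "smooth_on ?V P" unfolding P_def by (rule smooth_on_radial_integral[OF sm\<phi>])
  have lapP: "laplacian P x = 0" if x: "x \<in> ?B" for x
  proof -
    have "laplacian P x = radial_integral 2 (laplacian \<phi>) x"
      unfolding P_def using x BV by (intro laplacian_radial_integral[OF sm\<phi>]) auto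
    also have "\<dots> = 0" by (rule radial_integral_vanish[OF x lap\<phi>])
    finally show ?thesis .
  qed
  have "curl (curl (\<lambda>y. P y *\<^sub>R y)) x = Z x" if x: "x \<in> ?B" for x
  proof -
    have xV: "x \<in> ?V" using x BV by auto
    have "curl (curl (\<lambda>y. P y *\<^sub>R y)) x = grad (dr_rP P) x"
      using curl_curl_scaled_position[OF open_ball smP xV] lapP[OF x] by simp
    also have "\<dots> = Z x"
    proof (subst vec_eq_iff, intro allI)
      fix i
      have "partial i (dr_rP P) x = partial i \<phi> x"
        unfolding P_def using dr_rP_radial_integral[OF sm\<phi>] by (intro partial_cong[OF open_ball xV]) auto
      then show "grad (dr_rP P) x $ i = Z x $ i" using grad\<phi>[OF x] by (simp add: grad_def)
    qed
    finally show ?thesis .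
  qed
  with smP lapP that show ?thesis by blast
qed

lemma exists_harmonic_pol_tor_rep_on_ball:
  fixes \<eta> :: "real^3 \<Rightarrow> real^3"
  assumes r: "r > 1" and sm\<eta>: "\<And>m. smooth_on (ball 0 r) (\<lambda>y. \<eta> y $ m)"
    and div: "\<And>x. x \<in> ball 0 1 \<Longrightarrow> div3 \<eta> x = 0"
    and curl_curl: "\<And>x. x \<in> ball 0 1 \<Longrightarrow> curl (curl \<eta>) x = 0"
  obtains P T where "smooth_on (ball 0 r) P" "smooth_on (ball 0 r) T"
    "\<And>x. x \<in> ball 0 1 \<Longrightarrow> laplacian P x = 0" "\<And>x. x \<in> ball 0 1 \<Longrightarrow> laplacian T x = 0"
    "\<And>x. x \<in> ball 0 1 \<Longrightarrow> \<eta> x = curl (curl (\<lambda>y. P y *\<^sub>R y)) x + curl (\<lambda>y. T y *\<^sub>R y) x"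
proof -
  let ?B = "ball (0::real^3) 1" and ?V = "ball (0::real^3) r"
  have BV: "?B \<subseteq> ?V" using r by auto
  have d: "f differentiable (at x)" if "smooth_on ?V f" "x \<in> ?B" for f :: "real^3 \<Rightarrow> real" and x
    using smooth_on_imp_differentiable_at[OF that(1) open_ball subsetD[OF BV that(2)]] .
  have div\<omega>: "div3 (curl \<eta>) x = 0" if "x \<in> ?B" for x
    using div3_curl[OF open_ball sm\<eta>] that BV by auto
  obtain T where smT: "smooth_on ?V T" and lapT: "\<And>x. x \<in> ?B \<Longrightarrow> laplacian T x = 0"
    and T: "\<And>x. x \<in> ?B \<Longrightarrow> curl (curl (\<lambda>y. T y *\<^sub>R y)) x = curl \<eta> x"
    using exists_harmonic_poloidal_scalar[OF r smooth_on_curl[OF open_ball sm\<eta>] curl_curl div\<omega>]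
    by blast
  define \<tau> where "\<tau> = curl (\<lambda>y. T y *\<^sub>R y)"
  have sm\<tau>: "smooth_on ?V (\<lambda>y. \<tau> y $ m)" for m
    unfolding \<tau>_def by (intro smooth_on_curl smooth_on_scaled_position open_ball smT)
  define \<zeta> where "\<zeta> y = \<eta> y - \<tau> y" for y
  have sm\<zeta>: "smooth_on ?V (\<lambda>y. \<zeta> y $ m)" for m
    unfolding \<zeta>_def by (simp, intro smooth_on_diff open_ball sm\<eta> sm\<tau>)
  have curl\<zeta>: "curl \<zeta> x = 0" if x: "x \<in> ?B" for x
    unfolding \<zeta>_def using T[OF x] d[OF sm\<eta> x] d[OF sm\<tau> x]
    by (simp add: curl_diff \<tau>_def)
  have div\<zeta>: "div3 \<zeta> x = 0" if x: "x \<in> ?B" for x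
    unfolding \<zeta>_def using div d[OF sm\<eta> x] d[OF sm\<tau> x] x BV
      div3_curl[OF open_ball smooth_on_scaled_position[OF open_ball smT], of x]
    by (auto simp: div3_diff \<tau>_def)
  obtain P where "smooth_on ?V P" "\<And>x. x \<in> ?B \<Longrightarrow> laplacian P x = 0"
    and "\<And>x. x \<in> ?B \<Longrightarrow> curl (curl (\<lambda>y. P y *\<^sub>R y)) x = \<zeta> x"
    using exists_harmonic_poloidal_scalar[OF r sm\<zeta> curl\<zeta> div\<zeta>] by blast
  with smT lapT that show ?thesis by (simp add: \<zeta>_def \<tau>_def)
qed

lemma exists_harmonic_pol_tor_rep:
  fixes \<eta> :: "real^3 \<Rightarrow> real^3"
  assumes "smooth_on_Omega \<eta>"
    and "\<forall>x\<in>cball 0 1. div3 \<eta> x = 0"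
    and "\<forall>x\<in>cball 0 1. curl (curl \<eta>) x = 0"
  shows "\<exists>P T. smooth_on_Omega P \<and> smooth_on_Omega T \<and> pol_tor_rep \<eta> P T
              \<and> harmonic_on_Omega P \<and> harmonic_on_Omega T"
proof -
  obtain U where U: "open U" "cball 0 1 \<subseteq> U" "smooth_on U \<eta>"
    using assms(1) unfolding smooth_on_Omega_def by blast
  obtain r where r: "r > 1" "ball 0 r \<subseteq> U" using ball_between_cball_open[OF U(1,2)] by blast
  let ?V = "ball (0::real^3) r"
  have BV: "cball 0 1 \<subseteq> ?V" using r by auto
  have sm\<eta>: "smooth_on ?V (\<lambda>y. \<eta> y $ m)" for m
    using smooth_on_vec_nth[OF U(1,3)] r(2) by (rule smooth_on_subset)
  obtain P T where smP: "smooth_on ?V P" and smT: "smooth_on ?V T"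
    and harm: "\<And>x. x \<in> ball 0 1 \<Longrightarrow> laplacian P x = 0" "\<And>x. x \<in> ball 0 1 \<Longrightarrow> laplacian T x = 0"
    and rep: "\<And>x. x \<in> ball 0 1 \<Longrightarrow> \<eta> x = curl (curl (\<lambda>y. P y *\<^sub>R y)) x + curl (\<lambda>y. T y *\<^sub>R y) x"
    by (rule exists_harmonic_pol_tor_rep_on_ball[OF r(1) sm\<eta>]) (use assms(2,3) in auto)
  have "pol_tor_rep \<eta> P T"
    unfolding pol_tor_rep_def
  proof (intro ballI eq_on_cball_by_continuity[OF _ _ rep])
    show "continuous_on (cball 0 1) \<eta>"
      using smooth_on_imp_continuous_on[OF U(3)] U(2) by (rule continuous_on_subset)
    have "continuous_on ?V (\<lambda>y. curl (curl (\<lambda>y. P y *\<^sub>R y)) y + curl (\<lambda>y. T y *\<^sub>R y) y)"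
      by (intro continuous_on_add continuous_on_vector_field smooth_on_curl smooth_on_scaled_position
          open_ball smP smT)
    then show "continuous_on (cball 0 1)
        (\<lambda>y. curl (curl (\<lambda>y. P y *\<^sub>R y)) y + curl (\<lambda>y. T y *\<^sub>R y) y)"
      using BV by (rule continuous_on_subset)
  qed
  moreover have "smooth_on_Omega P" "smooth_on_Omega T"
    unfolding smooth_on_Omega_def using BV smP smT by auto
  moreover have "harmonic_on_Omega P" "harmonic_on_Omega T"
    using harmonic_on_Omega_if_harmonic_on_ball[OF open_ball BV] smP smT harm by auto
  ultimately show ?thesis by blast
qed

lemma curl_curl_harmonic_scaled_position:
  assumes "smooth_on_Omega P" "harmonic_on_Omega P" "x \<in> cball 0 1"
  shows "curl (curl (\<lambda>y. P y *\<^sub>R y)) x = grad (dr_rP P) x"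
proof -
  obtain U where "open U" "cball 0 1 \<subseteq> U" "smooth_on U P"
    using assms(1) unfolding smooth_on_Omega_def by blast
  then show ?thesis
    using curl_curl_scaled_position[of U P x] assms(2,3) by (auto simp: harmonic_on_Omega_def)
qed

lemma harmonic_on_Omega_dr_rP:
  assumes "smooth_on_Omega P" "harmonic_on_Omega P"
  shows "harmonic_on_Omega (dr_rP P)"
proof -
  obtain U where U: "open U" "cball 0 1 \<subseteq> U" "smooth_on U P"
    using assms(1) unfolding smooth_on_Omega_def by blast
  show ?thesis
  proof (rule harmonic_on_Omega_if_harmonic_on_ball[OF U(1,2) smooth_on_dr_rP[OF U(1,3)]])
    fix x :: "real^3" assume x: "x \<in> ball 0 1"
    have harm: "laplacian P y = 0" if "y \<in> ball 0 1" for y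
      using assms(2) that unfolding harmonic_on_Omega_def by auto
    have "partial i (laplacian P) x = partial i (\<lambda>y. 0) x" for i
      by (rule partial_cong[OF open_ball x harm])
    then have "grad (laplacian P) x = 0" by (simp add: grad_def vec_eq_iff)
    moreover have "x \<in> U" using x U(2) by auto
    ultimately show "laplacian (dr_rP P) x = 0"
      using laplacian_dr_rP[OF U(1,3)] harm[OF x] by simp
  qed
qed

theorem mainTheorem3:
  fixes \<eta> :: "real^3 \<Rightarrow> real^3"
  assumes "smooth_on_Omega \<eta>"
    and "\<forall>x\<in>cball 0 1. div3 \<eta> x = 0"
    and "\<forall>x\<in>cball 0 1. curl (curl \<eta>) x = 0"
  shows "(\<exists>P T. smooth_on_Omega P \<and> smooth_on_Omega T \<and> pol_tor_rep \<eta> P T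
              \<and> harmonic_on_Omega P \<and> harmonic_on_Omega T)
       \<and> (\<forall>P T. smooth_on_Omega P \<and> smooth_on_Omega T \<and> pol_tor_rep \<eta> P T
              \<and> harmonic_on_Omega P \<and> harmonic_on_Omega T \<longrightarrow>
              (\<forall>x\<in>cball 0 1. curl (curl (\<lambda>y. P y *\<^sub>R y)) x = grad (dr_rP P) x)
              \<and> harmonic_on_Omega (dr_rP P))"
  using exists_harmonic_pol_tor_rep[OF assms] curl_curl_harmonic_scaled_position
    harmonic_on_Omega_dr_rP by blast

end
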